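(* Let $\mathcal{X}$ be a nonempty finite set and $k:\mathcal{X}\times\mathcal{X}\to\mathbb{R}_{\ge 0}$. Then $k$ is a strong kernel if and only if $k$ is induced by some hierarchy on $\mathcal{X}$.
   Context: A rooted tree is a finite tree $T$ with a distinguished root vertex $r$. For a vertex $v$, its parent $p(v)$ is the vertex following $v$ on the unique path from $v$ to $r$, with the convention $p(r)=r$. The ancestors of $v$ are the vertices on the path from $v$ to $r$ (including $v$ and $r$); the depth of $v$ is the number of edges on this path. The lowest common ancestor $\mathrm{LCA}(u,v)$ is the unique vertex of maximum depth that is an ancestor of both $u$ and $v$. A hierarchy on a set $\mathcal{X}$ is a pair $(T,w)$ where $T$ is a rooted tree whose set of leaves is exactly $\mathcal{X}$, and $w:V(T)\to\mathbb{R}_{\ge 0}$ satisfies $w(v)\ge w(p(v))$ for all $v\in V(T)$. The kernel induced by $(T,w)$ is $k(x,y)=w(\mathrm{LCA}(x,y))$ for $x,y\in\mathcal{X}$. A strong kernel on a set $\mathcal{X}$ is a symmetric function $k:\mathcal{X}\times\mathcal{X}\to\mathbb{R}_{\ge 0}$ such that $k(x,y)\ge\min\{k(x,z),k(z,y)\}$ for all $x,y,z\in\mathcal{X}$. *)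

theory Defs
  imports Complex_Main
begin

text \<open>Vertices of the tree have type 'a + nat: leaves are the elements Inl x of the
ground set, internal vertices are labelled by Inr n (any finite tree with leaf
set X is isomorphic to such a tree).\<close>

definition rooted_tree :: "'v set \<Rightarrow> 'v \<Rightarrow> ('v \<Rightarrow> 'v) \<Rightarrow> bool" where
  "rooted_tree V r p \<longleftrightarrow> finite V \<and> r \<in> V \<and> p r = r \<and> (\<forall>v\<in>V. p v \<in> V)
     \<and> (\<forall>v\<in>V. \<exists>n. (p ^^ n) v = r)"

definition ancestors :: "('v \<Rightarrow> 'v) \<Rightarrow> 'v \<Rightarrow> 'v set" where
  "ancestors p v = {(p ^^ n) v | n. True}"

definition depth :: "('v \<Rightarrow> 'v) \<Rightarrow> 'v \<Rightarrow> 'v \<Rightarrow> nat" where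
  "depth p r v = (LEAST n. (p ^^ n) v = r)"

definition lca :: "('v \<Rightarrow> 'v) \<Rightarrow> 'v \<Rightarrow> 'v \<Rightarrow> 'v \<Rightarrow> 'v" where
  "lca p r u v = (THE a. a \<in> ancestors p u \<inter> ancestors p v \<and>
      (\<forall>b \<in> ancestors p u \<inter> ancestors p v. depth p r b \<le> depth p r a))"

definition leaves :: "'v set \<Rightarrow> ('v \<Rightarrow> 'v) \<Rightarrow> 'v set" where
  "leaves V p = {v \<in> V. \<not> (\<exists>u\<in>V. u \<noteq> v \<and> p u = v)}"

definition hierarchy ::
  "'a set \<Rightarrow> ('a + nat) set \<Rightarrow> ('a + nat) \<Rightarrow> (('a + nat) \<Rightarrow> ('a + nat)) \<Rightarrow> (('a + nat) \<Rightarrow> real) \<Rightarrow> bool" where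
  "hierarchy X V r p w \<longleftrightarrow> rooted_tree V r p \<and> leaves V p = Inl ` X
     \<and> (\<forall>v\<in>V. 0 \<le> w v \<and> w (p v) \<le> w v)"

definition strong_kernel :: "'a set \<Rightarrow> ('a \<Rightarrow> 'a \<Rightarrow> real) \<Rightarrow> bool" where
  "strong_kernel X k \<longleftrightarrow>
     (\<forall>x\<in>X. \<forall>y\<in>X. k x y = k y x \<and> 0 \<le> k x y) \<and>
     (\<forall>x\<in>X. \<forall>y\<in>X. \<forall>z\<in>X. min (k x z) (k z y) \<le> k x y)"

end

theory Submission
  imports Defs "HOL-Library.Nat_Bijection"
begin

text \<open>If k is induced by a hierarchy, then among LCA(x,z) and LCA(z,y), which both lie on the
path from z to the root, the higher one is a common ancestor of x and y, hence an ancestor of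
LCA(x,y); monotonicity of w along that path gives the ultrametric inequality.
Conversely, the ultrametric inequality makes the balls {y. t \<le> k x y} into a nested family:
two balls of the same radius t either coincide or are disjoint. Taking one internal vertex for
each ball whose radius is a value of k, with the ball of the next smaller radius as its parent,
and hanging each leaf x below its ball of radius k x x, gives a tree in which LCA(x,y) is the
ball of radius k x y around x.\<close>

section \<open>Ancestors and lowest common ancestors in rooted trees\<close>

lemma funpow_fixed_point: "p r = r \<Longrightarrow> (p ^^ n) r = r"
  by (induction n) auto

lemma rooted_tree_funpow_in: "rooted_tree V r p \<Longrightarrow> v \<in> V \<Longrightarrow> (p ^^ n) v \<in> V"
  by (induction n) (auto simp: rooted_tree_def)

lemma ancestors_subset: "rooted_tree V r p \<Longrightarrow> v \<in> V \<Longrightarrow> ancestors p v \<subseteq> V"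
  unfolding ancestors_def using rooted_tree_funpow_in[of V r p v] by auto

lemma ancestors_refl: "v \<in> ancestors p v"
  unfolding ancestors_def by (auto intro: exI[of _ 0])

lemma ancestors_funpow: "(p ^^ n) v \<in> ancestors p v"
  unfolding ancestors_def by auto

lemma root_in_ancestors:
  assumes "rooted_tree V r p" and "v \<in> V"
  shows "r \<in> ancestors p v"
proof -
  obtain n where "(p ^^ n) v = r" using assms unfolding rooted_tree_def by blast
  then show ?thesis using ancestors_funpow by metis
qed

lemma ancestors_trans:
  assumes "a \<in> ancestors p b" and "b \<in> ancestors p c"
  shows "a \<in> ancestors p c"
proof -
  obtain i j where "a = (p ^^ i) b" and "b = (p ^^ j) c"
    using assms unfolding ancestors_def by auto
  then have "a = (p ^^ (i + j)) c" by (simp add: funpow_add)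
  then show ?thesis by (simp add: ancestors_funpow)
qed

lemma ancestors_linear:
  assumes "a \<in> ancestors p v" and "b \<in> ancestors p v"
  shows "a \<in> ancestors p b \<or> b \<in> ancestors p a"
proof -
  obtain i j where a: "a = (p ^^ i) v" and b: "b = (p ^^ j) v"
    using assms unfolding ancestors_def by auto
  show ?thesis
  proof (cases "i \<le> j")
    case True
    then have "b = (p ^^ (j - i)) a" using a b by (metis funpow_add comp_apply le_add_diff_inverse2)
    then show ?thesis by (simp add: ancestors_funpow)
  next
    case False
    then have "a = (p ^^ (i - j)) b" using a b by (metis funpow_add comp_apply le_add_diff_inverse2 nat_le_linear)
    then show ?thesis by (simp add: ancestors_funpow)
  qed
qed

lemma depth_funpow:
  assumes rt: "rooted_tree V r p" and v: "v \<in> V"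
  shows "depth p r ((p ^^ j) v) = depth p r v - j"
proof -
  define d where "d = depth p r v"
  have "\<exists>n. (p ^^ n) v = r" using rt v by (auto simp: rooted_tree_def)
  then have d_root: "(p ^^ d) v = r" unfolding d_def depth_def by (rule LeastI_ex)
  have d_least: "\<And>n. (p ^^ n) v = r \<Longrightarrow> d \<le> n" unfolding d_def depth_def by (rule Least_le)
  show ?thesis
  proof (cases "j \<le> d")
    case True
    have "depth p r ((p ^^ j) v) = d - j"
      unfolding depth_def
    proof (rule Least_equality)
      show "(p ^^ (d - j)) ((p ^^ j) v) = r"
        using d_root True by (metis funpow_add comp_apply le_add_diff_inverse2)
    next
      fix n assume "(p ^^ n) ((p ^^ j) v) = r"
      then have "d \<le> n + j" by (intro d_least) (simp add: funpow_add)
      then show "d - j \<le> n" by simp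
    qed
    then show ?thesis by (simp add: d_def)
  next
    case False
    then have "(p ^^ j) v = (p ^^ (j - d)) ((p ^^ d) v)"
      by (metis funpow_add comp_apply le_add_diff_inverse2 nat_le_linear)
    also have "\<dots> = r" using d_root funpow_fixed_point[of p r] rt by (simp add: rooted_tree_def)
    finally have "depth p r ((p ^^ j) v) = 0" unfolding depth_def by (simp add: Least_eq_0)
    then show ?thesis using False by (simp add: d_def)
  qed
qed

lemma depth_ancestor_le:
  assumes "rooted_tree V r p" and "v \<in> V" and "a \<in> ancestors p v"
  shows "depth p r a \<le> depth p r v"
proof -
  obtain j where "a = (p ^^ j) v" using assms(3) unfolding ancestors_def by auto
  then show ?thesis using depth_funpow[OF assms(1,2)] by simp
qed

lemma depth_ancestor_eq:
  assumes rt: "rooted_tree V r p" and v: "v \<in> V" and a: "a \<in> ancestors p v"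
    and eq: "depth p r a = depth p r v"
  shows "a = v"
proof -
  obtain j where a_def: "a = (p ^^ j) v" using a unfolding ancestors_def by auto
  show ?thesis
  proof (cases "j = 0")
    case False
    have "depth p r v = 0" using depth_funpow[OF rt v, of j] a_def eq False by simp
    moreover have "\<exists>n. (p ^^ n) v = r" using rt v by (auto simp: rooted_tree_def)
    then have "(p ^^ depth p r v) v = r" unfolding depth_def by (rule LeastI_ex)
    ultimately have "v = r" by simp
    then show ?thesis using a_def funpow_fixed_point[of p r] rt by (simp add: rooted_tree_def)
  qed (simp add: a_def)
qed

text \<open>Common ancestors form a finite chain containing r; its deepest element lies below all others.\<close>

lemma deepest_common_ancestor:
  assumes rt: "rooted_tree V r p" and u: "u \<in> V" and v: "v \<in> V"
  shows "\<exists>a \<in> ancestors p u \<inter> ancestors p v.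
           \<forall>b \<in> ancestors p u \<inter> ancestors p v. b \<in> ancestors p a"
proof -
  define C where "C = ancestors p u \<inter> ancestors p v"
  have "finite C"
    using ancestors_subset[OF rt u] rt unfolding C_def rooted_tree_def by (meson finite_Int finite_subset)
  moreover have "r \<in> C" using root_in_ancestors[OF rt] u v unfolding C_def by blast
  ultimately have "Max (depth p r ` C) \<in> depth p r ` C" by (intro Max_in) auto
  then obtain a where aC: "a \<in> C" and "depth p r a = Max (depth p r ` C)" by auto
  then have a_max: "\<And>b. b \<in> C \<Longrightarrow> depth p r b \<le> depth p r a"
    using \<open>finite C\<close> by simp
  have "b \<in> ancestors p a" if bC: "b \<in> C" for b
  proof -
    have bV: "b \<in> V" using bC ancestors_subset[OF rt u] unfolding C_def by blast
    have "b \<in> ancestors p a \<or> a \<in> ancestors p b"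
      using ancestors_linear[of b p u a] aC bC unfolding C_def by blast
    moreover have "a = b" if ab: "a \<in> ancestors p b"
    proof -
      have "depth p r a = depth p r b"
        using depth_ancestor_le[OF rt bV ab] a_max[OF bC] by simp
      then show ?thesis using depth_ancestor_eq[OF rt bV ab] by simp
    qed
    ultimately show ?thesis using ancestors_refl by blast
  qed
  with aC show ?thesis unfolding C_def by blast
qed

lemma lca_eqI:
  assumes rt: "rooted_tree V r p" and u: "u \<in> V"
    and c: "c \<in> ancestors p u \<inter> ancestors p v"
    and greatest: "\<And>b. b \<in> ancestors p u \<inter> ancestors p v \<Longrightarrow> b \<in> ancestors p c"
  shows "lca p r u v = c"
  unfolding lca_def
proof (rule the_equality)
  have cV: "c \<in> V" using c ancestors_subset[OF rt u] by blast
  have deeper: "depth p r b \<le> depth p r c" if "b \<in> ancestors p u \<inter> ancestors p v" for b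
    using depth_ancestor_le[OF rt cV greatest[OF that]] .
  then show "c \<in> ancestors p u \<inter> ancestors p v \<and>
      (\<forall>b \<in> ancestors p u \<inter> ancestors p v. depth p r b \<le> depth p r c)"
    using c by blast
  fix a assume a: "a \<in> ancestors p u \<inter> ancestors p v \<and>
      (\<forall>b \<in> ancestors p u \<inter> ancestors p v. depth p r b \<le> depth p r a)"
  then have a_common: "a \<in> ancestors p u \<inter> ancestors p v" and "depth p r c \<le> depth p r a"
    using c by blast+
  then have "depth p r a = depth p r c" using deeper[OF a_common] by simp
  then show "a = c" using depth_ancestor_eq[OF rt cV greatest[OF a_common]] by simp
qed

lemma lca_ancestors:
  assumes "rooted_tree V r p" and "u \<in> V" and "v \<in> V"
  shows "lca p r u v \<in> ancestors p u \<inter> ancestors p v"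
proof -
  obtain a where "a \<in> ancestors p u \<inter> ancestors p v"
    and "\<And>b. b \<in> ancestors p u \<inter> ancestors p v \<Longrightarrow> b \<in> ancestors p a"
    using deepest_common_ancestor[OF assms] by blast
  with lca_eqI[OF assms(1,2)] show ?thesis by metis
qed

lemma lca_greatest:
  assumes "rooted_tree V r p" and "u \<in> V" and "v \<in> V"
    and "b \<in> ancestors p u \<inter> ancestors p v"
  shows "b \<in> ancestors p (lca p r u v)"
proof -
  obtain a where "a \<in> ancestors p u \<inter> ancestors p v"
    and "\<And>b. b \<in> ancestors p u \<inter> ancestors p v \<Longrightarrow> b \<in> ancestors p a"
    using deepest_common_ancestor[OF assms(1-3)] by blast
  with lca_eqI[OF assms(1,2)] assms(4) show ?thesis by metis
qed

lemma lca_commute: "lca p r u v = lca p r v u"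
  unfolding lca_def by (simp only: Int_commute)

lemma lca_in_vertices: "rooted_tree V r p \<Longrightarrow> u \<in> V \<Longrightarrow> v \<in> V \<Longrightarrow> lca p r u v \<in> V"
  using lca_ancestors[of V r p u v] ancestors_subset[of V r p u] by blast

lemma lca_triangle:
  assumes rt: "rooted_tree V r p" and u: "u \<in> V" and v: "v \<in> V" and w: "w \<in> V"
  shows "lca p r u w \<in> ancestors p (lca p r u v) \<or> lca p r w v \<in> ancestors p (lca p r u v)"
proof -
  have uw: "lca p r u w \<in> ancestors p u \<inter> ancestors p w" using lca_ancestors[OF rt u w] .
  have wv: "lca p r w v \<in> ancestors p w \<inter> ancestors p v" using lca_ancestors[OF rt w v] .
  have "lca p r w v \<in> ancestors p (lca p r u w) \<or> lca p r u w \<in> ancestors p (lca p r w v)"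
    using ancestors_linear[OF IntD1[OF wv] IntD2[OF uw]] .
  then show ?thesis
  proof
    assume "lca p r w v \<in> ancestors p (lca p r u w)"
    from ancestors_trans[OF this IntD1[OF uw]] have "lca p r w v \<in> ancestors p u" .
    with IntD2[OF wv] show ?thesis using lca_greatest[OF rt u v] by blast
  next
    assume "lca p r u w \<in> ancestors p (lca p r w v)"
    from ancestors_trans[OF this IntD2[OF wv]] have "lca p r u w \<in> ancestors p v" .
    with IntD1[OF uw] show ?thesis using lca_greatest[OF rt u v] by blast
  qed
qed

lemma weight_ancestor_le:
  fixes w :: "'v \<Rightarrow> real"
  assumes rt: "rooted_tree V r p" and v: "v \<in> V" and mono: "\<forall>u\<in>V. w (p u) \<le> w u"
    and a: "a \<in> ancestors p v"
  shows "w a \<le> w v"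
proof -
  have "w ((p ^^ n) v) \<le> w v" for n
  proof (induction n)
    case (Suc n)
    have "w (p ((p ^^ n) v)) \<le> w ((p ^^ n) v)"
      using mono rooted_tree_funpow_in[OF rt v] by blast
    then show ?case using Suc by simp
  qed simp
  then show ?thesis using a unfolding ancestors_def by auto
qed

section \<open>Kernels induced by hierarchies are strong\<close>

lemma hierarchy_strong_kernel:
  fixes k :: "'a \<Rightarrow> 'a \<Rightarrow> real"
  assumes h: "hierarchy X V r p w"
    and k: "\<forall>x\<in>X. \<forall>y\<in>X. k x y = w (lca p r (Inl x) (Inl y))"
  shows "strong_kernel X k"
proof -
  have rt: "rooted_tree V r p" and leaves: "leaves V p = Inl ` X"
    and w: "\<forall>v\<in>V. 0 \<le> w v \<and> w (p v) \<le> w v"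
    using h unfolding hierarchy_def by auto
  have XV: "Inl x \<in> V" if "x \<in> X" for x
    using leaves that unfolding leaves_def by blast
  have w_mono: "\<forall>v\<in>V. w (p v) \<le> w v" using w by blast
  have "min (k x z) (k z y) \<le> k x y" if x: "x \<in> X" and y: "y \<in> X" and z: "z \<in> X" for x y z
  proof -
    let ?c = "lca p r (Inl x) (Inl y)"
    have cV: "?c \<in> V" using lca_in_vertices[OF rt XV[OF x] XV[OF y]] .
    have "lca p r (Inl x) (Inl z) \<in> ancestors p ?c \<or> lca p r (Inl z) (Inl y) \<in> ancestors p ?c"
      using lca_triangle[OF rt XV[OF x] XV[OF y] XV[OF z]] .
    then have "w (lca p r (Inl x) (Inl z)) \<le> w ?c \<or> w (lca p r (Inl z) (Inl y)) \<le> w ?c"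
      using weight_ancestor_le[OF rt cV w_mono] by blast
    then show ?thesis using k x y z by auto
  qed
  moreover have "k x y = k y x \<and> 0 \<le> k x y" if x: "x \<in> X" and y: "y \<in> X" for x y
    using k x y w lca_in_vertices[OF rt XV[OF x] XV[OF y]] lca_commute[of p r "Inl x"] by simp
  ultimately show ?thesis unfolding strong_kernel_def by blast
qed

section \<open>Every strong kernel is induced by a hierarchy\<close>

locale strong_kernel_tree =
  fixes X :: "'a set" and k :: "'a \<Rightarrow> 'a \<Rightarrow> real" and g :: "'a \<Rightarrow> nat"
  assumes finite_X: "finite X" and X_nonempty: "X \<noteq> {}"
    and strong: "strong_kernel X k" and inj_g: "inj_on g X"
begin

definition kernel_values :: "real set" where
  "kernel_values = (\<lambda>(x, y). k x y) ` (X \<times> X)"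

definition levels :: "real list" where
  "levels = sorted_list_of_set kernel_values"

definition level_of :: "real \<Rightarrow> nat" where
  "level_of t = (THE i. i < length levels \<and> levels ! i = t)"

definition ball :: "nat \<Rightarrow> 'a \<Rightarrow> 'a set" where
  "ball i x = {y \<in> X. levels ! i \<le> k x y}"

text \<open>The internal vertex for the ball of radius levels ! i around x is named by i and the least
g-code of a member of the ball, so that all centres of the ball give the same vertex.\<close>

definition node :: "nat \<Rightarrow> 'a \<Rightarrow> 'a + nat" where
  "node i x = Inr (prod_encode (i, Min (g ` ball i x)))"

definition is_node :: "nat \<Rightarrow> 'a \<Rightarrow> bool" where
  "is_node i x \<longleftrightarrow> x \<in> X \<and> i < length levels \<and> levels ! i \<le> k x x"

definition parent :: "'a + nat \<Rightarrow> 'a + nat" where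
  "parent v = (case v of
      Inl x \<Rightarrow> node (level_of (k x x)) x
    | Inr n \<Rightarrow> (case prod_decode n of (i, j) \<Rightarrow>
        if i = 0 then Inr n else node (i - 1) (inv_into X g j)))"

definition vertices :: "('a + nat) set" where
  "vertices = Inl ` X \<union> (\<lambda>(i, x). node i x) ` {(i, x). is_node i x}"

definition root :: "'a + nat" where
  "root = node 0 (SOME x. x \<in> X)"

definition weight :: "'a + nat \<Rightarrow> real" where
  "weight v = (case v of Inl x \<Rightarrow> k x x | Inr n \<Rightarrow> levels ! fst (prod_decode n))"

lemma k_sym: "x \<in> X \<Longrightarrow> y \<in> X \<Longrightarrow> k x y = k y x"
  using strong by (simp add: strong_kernel_def)

lemma k_nonneg: "x \<in> X \<Longrightarrow> y \<in> X \<Longrightarrow> 0 \<le> k x y"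
  using strong by (simp add: strong_kernel_def)

lemma k_ultra: "x \<in> X \<Longrightarrow> y \<in> X \<Longrightarrow> z \<in> X \<Longrightarrow> min (k x z) (k z y) \<le> k x y"
  using strong unfolding strong_kernel_def by blast

lemma k_le_diag: "x \<in> X \<Longrightarrow> y \<in> X \<Longrightarrow> k x y \<le> k x x"
  using k_ultra[of x x y] k_sym[of x y] by simp

lemma k_in_kernel_values: "x \<in> X \<Longrightarrow> y \<in> X \<Longrightarrow> k x y \<in> kernel_values"
  unfolding kernel_values_def by force

lemma set_levels: "set levels = kernel_values"
  unfolding levels_def kernel_values_def using finite_X by simp

lemma levels_nonneg: "i < length levels \<Longrightarrow> 0 \<le> levels ! i"
  using nth_mem[of i levels] k_nonneg unfolding set_levels kernel_values_def by auto

lemma levels_nonempty: "0 < length levels"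
proof -
  obtain x where "x \<in> X" using X_nonempty by blast
  then have "set levels \<noteq> {}" using k_in_kernel_values[of x x] set_levels by auto
  then show ?thesis by simp
qed

lemma levels_less: "i < j \<Longrightarrow> j < length levels \<Longrightarrow> levels ! i < levels ! j"
  unfolding levels_def by (rule sorted_wrt_nth_less[OF strict_sorted_list_of_set])

lemma levels_mono: "i \<le> j \<Longrightarrow> j < length levels \<Longrightarrow> levels ! i \<le> levels ! j"
  unfolding levels_def by (rule sorted_nth_mono) simp_all

lemma levels_le_imp_le:
  "i < length levels \<Longrightarrow> j < length levels \<Longrightarrow> levels ! i \<le> levels ! j \<Longrightarrow> i \<le> j"
  using levels_less[of j i] by (meson leD not_le_imp_less)

lemma level_of:
  assumes "t \<in> kernel_values"
  shows "level_of t < length levels" and "levels ! level_of t = t"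
proof -
  have "\<exists>!i. i < length levels \<and> levels ! i = t"
    using distinct_Ex1[of levels t] assms set_levels by (simp add: levels_def)
  then have "level_of t < length levels \<and> levels ! level_of t = t"
    unfolding level_of_def by (rule theI')
  then show "level_of t < length levels" and "levels ! level_of t = t" by auto
qed

lemma levels_0_le: "t \<in> kernel_values \<Longrightarrow> levels ! 0 \<le> t"
  using level_of[of t] levels_mono[of 0 "level_of t"] by auto

lemma ball_eq:
  assumes x: "x \<in> X" and z: "z \<in> X" and xz: "levels ! i \<le> k x z"
  shows "ball i x = ball i z"
  unfolding ball_def
proof (intro Collect_cong conj_cong refl)
  fix y assume y: "y \<in> X"
  have "min (k z x) (k x y) \<le> k z y" and "min (k x z) (k z y) \<le> k x y"
    using k_ultra[OF z y x] k_ultra[OF x y z] .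
  then show "levels ! i \<le> k x y \<longleftrightarrow> levels ! i \<le> k z y" using xz k_sym[OF x z] by linarith
qed

lemma node_eq: "x \<in> X \<Longrightarrow> z \<in> X \<Longrightarrow> levels ! i \<le> k x z \<Longrightarrow> node i x = node i z"
  unfolding node_def using ball_eq by simp

lemma node_neq_Inl: "node i x \<noteq> Inl y"
  by (simp add: node_def)

lemma Min_ball:
  assumes "x \<in> X" and "levels ! i \<le> k x x"
  obtains z where "z \<in> ball i x" and "Min (g ` ball i x) = g z"
proof -
  have "x \<in> ball i x" using assms unfolding ball_def by simp
  moreover have "finite (ball i x)" unfolding ball_def using finite_X by simp
  ultimately have "Min (g ` ball i x) \<in> g ` ball i x" by (intro Min_in) auto
  then show ?thesis using that by blast
qed

lemma node_inj:
  assumes x: "x \<in> X" and y: "y \<in> X" and hx: "levels ! i \<le> k x x" and hy: "levels ! j \<le> k y y"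
    and eq: "node i x = node j y"
  shows "i = j" and "levels ! i \<le> k x y"
proof -
  show ij: "i = j" using eq by (simp add: node_def)
  obtain z where z: "z \<in> ball i x" "Min (g ` ball i x) = g z" using Min_ball[OF x hx] .
  obtain z' where z': "z' \<in> ball j y" "Min (g ` ball j y) = g z'" using Min_ball[OF y hy] .
  have "g z = g z'" using eq z(2) z'(2) by (simp add: node_def)
  then have "z = z'" using inj_g z(1) z'(1) unfolding ball_def inj_on_def by blast
  then have zX: "z \<in> X" and "levels ! i \<le> k x z" "levels ! i \<le> k y z"
    using z(1) z'(1) ij unfolding ball_def by auto
  with k_ultra[OF x y zX] k_sym[OF y zX] show "levels ! i \<le> k x y" by linarith
qed

lemma is_node_mono: "is_node i x \<Longrightarrow> j \<le> i \<Longrightarrow> is_node j x"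
  unfolding is_node_def using levels_mono by (meson le_less_trans order_trans)

lemma is_node_leaf_level: "x \<in> X \<Longrightarrow> is_node (level_of (k x x)) x"
  using level_of[OF k_in_kernel_values] unfolding is_node_def by simp

lemma is_node_0: "x \<in> X \<Longrightarrow> is_node 0 x"
  unfolding is_node_def using levels_nonempty levels_0_le[OF k_in_kernel_values] by simp

lemma parent_Inl: "parent (Inl x) = node (level_of (k x x)) x"
  by (simp add: parent_def)

lemma parent_node:
  assumes "is_node i x"
  shows "parent (node i x) = node (i - 1) x"
proof (cases "i = 0")
  case True
  then show ?thesis by (simp add: parent_def node_def)
next
  case False
  have x: "x \<in> X" and hx: "levels ! i \<le> k x x" and i: "i < length levels"
    using assms by (auto simp: is_node_def)
  obtain z where z: "z \<in> ball i x" "Min (g ` ball i x) = g z" using Min_ball[OF x hx] .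
  have zX: "z \<in> X" and xz: "levels ! i \<le> k x z" using z(1) unfolding ball_def by auto
  have "levels ! (i - 1) \<le> levels ! i" using levels_mono i by simp
  then have "node (i - 1) x = node (i - 1) z" using node_eq[OF x zX] xz by simp
  then show ?thesis using False z(2) inv_into_f_f[OF inj_g zX] by (simp add: parent_def node_def)
qed

lemma funpow_parent_node: "is_node i x \<Longrightarrow> (parent ^^ n) (node i x) = node (i - n) x"
proof (induction n)
  case (Suc n)
  have "is_node (i - n) x" using is_node_mono[OF Suc.prems] by simp
  then show ?case using Suc parent_node by simp
qed simp

lemma funpow_parent_Inl:
  "x \<in> X \<Longrightarrow> (parent ^^ Suc n) (Inl x) = node (level_of (k x x) - n) x"
  by (simp only: funpow_Suc_right comp_apply parent_Inl funpow_parent_node[OF is_node_leaf_level])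

lemma ancestors_Inl:
  assumes x: "x \<in> X" and b: "b \<in> ancestors parent (Inl x)"
  shows "b = Inl x \<or> (\<exists>j \<le> level_of (k x x). b = node j x)"
proof -
  obtain n where b: "b = (parent ^^ n) (Inl x)" using b unfolding ancestors_def by auto
  show ?thesis
  proof (cases n)
    case (Suc n')
    then have "b = node (level_of (k x x) - n') x" using b funpow_parent_Inl[OF x] by simp
    then show ?thesis by (intro disjI2 exI[of _ "level_of (k x x) - n'"]) simp
  qed (simp add: b)
qed

lemma node_in_ancestors_Inl:
  assumes x: "x \<in> X" and j: "j \<le> level_of (k x x)"
  shows "node j x \<in> ancestors parent (Inl x)"
proof -
  have "(parent ^^ Suc (level_of (k x x) - j)) (Inl x) = node j x"
    using funpow_parent_Inl[OF x, of "level_of (k x x) - j"] j by simp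
  then show ?thesis using ancestors_funpow by metis
qed

lemma node_in_ancestors_node: "is_node i x \<Longrightarrow> j \<le> i \<Longrightarrow> node j x \<in> ancestors parent (node i x)"
  using ancestors_funpow[where p = parent and n = "i - j" and v = "node i x"] by (simp add: funpow_parent_node)

lemma node_in_vertices: "is_node i x \<Longrightarrow> node i x \<in> vertices"
  unfolding vertices_def by force

lemma Inl_in_vertices: "x \<in> X \<Longrightarrow> Inl x \<in> vertices"
  unfolding vertices_def by blast

lemma vertices_cases:
  assumes "v \<in> vertices"
  obtains x where "x \<in> X" and "v = Inl x" | i x where "is_node i x" and "v = node i x"
  using assms unfolding vertices_def by (elim UnE imageE) auto

lemma root_eq_node_0: "x \<in> X \<Longrightarrow> node 0 x = root"
  unfolding root_def using X_nonempty
  by (intro node_eq) (auto simp: some_in_eq levels_0_le k_in_kernel_values)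

lemma rooted_tree_vertices: "rooted_tree vertices root parent"
proof -
  have "{(i, x). is_node i x} \<subseteq> {..<length levels} \<times> X" unfolding is_node_def by auto
  then have "finite {(i, x). is_node i x}" using finite_X by (meson finite_SigmaI finite_lessThan finite_subset)
  then have "finite vertices" unfolding vertices_def using finite_X by simp
  moreover obtain x where x: "x \<in> X" using X_nonempty by blast
  then have "root \<in> vertices" and "parent root = root"
    using node_in_vertices[OF is_node_0[OF x]] parent_node[OF is_node_0[OF x]] root_eq_node_0[OF x]
    by simp_all
  moreover have "parent v \<in> vertices \<and> (\<exists>n. (parent ^^ n) v = root)" if "v \<in> vertices" for v
    using that
  proof (cases rule: vertices_cases)
    case (1 x)
    then have "(parent ^^ Suc (level_of (k x x))) v = root"
      using funpow_parent_Inl root_eq_node_0 by simp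
    then have "\<exists>n. (parent ^^ n) v = root" by blast
    then show ?thesis using 1 node_in_vertices[OF is_node_leaf_level] parent_Inl by auto
  next
    case (2 i x)
    then have "(parent ^^ i) v = root"
      using funpow_parent_node root_eq_node_0 by (simp add: is_node_def)
    then have "\<exists>n. (parent ^^ n) v = root" by blast
    then show ?thesis using 2 parent_node node_in_vertices is_node_mono[of i x "i - 1"] by auto
  qed
  ultimately show ?thesis unfolding rooted_tree_def by blast
qed

lemma parent_neq_Inl: "v \<in> vertices \<Longrightarrow> parent v \<noteq> Inl y"
  by (erule vertices_cases) (auto simp: parent_Inl parent_node node_neq_Inl)

lemma node_not_leaf:
  assumes v: "is_node i x"
  obtains u where "u \<in> vertices" and "u \<noteq> node i x" and "parent u = node i x"
proof -
  have x: "x \<in> X" and i: "i < length levels" and ix: "levels ! i \<le> k x x"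
    using v unfolding is_node_def by auto
  let ?l = "level_of (k x x)"
  have "i \<le> ?l"
    using levels_le_imp_le[OF i] level_of[OF k_in_kernel_values[OF x x]] ix by simp
  then consider "i = ?l" | "i + 1 \<le> ?l" by linarith
  then show ?thesis
  proof cases
    case 1
    then show ?thesis using that[of "Inl x"] Inl_in_vertices[OF x] parent_Inl node_neq_Inl by metis
  next
    case 2
    then have "is_node (i + 1) x" using is_node_mono[OF is_node_leaf_level[OF x]] by blast
    then show ?thesis
      using that[of "node (i + 1) x"] node_in_vertices parent_node by (simp add: node_def)
  qed
qed

lemma leaves_vertices: "leaves vertices parent = Inl ` X"
proof
  show "Inl ` X \<subseteq> leaves vertices parent"
    unfolding leaves_def using parent_neq_Inl Inl_in_vertices by blast
  show "leaves vertices parent \<subseteq> Inl ` X"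
  proof
    fix v assume "v \<in> leaves vertices parent"
    then have v: "v \<in> vertices" and childless: "\<And>u. u \<in> vertices \<Longrightarrow> u \<noteq> v \<Longrightarrow> parent u \<noteq> v"
      unfolding leaves_def by auto
    from v show "v \<in> Inl ` X"
    proof (rule vertices_cases)
      fix i x assume "is_node i x" and "v = node i x"
      then show ?thesis using node_not_leaf childless by metis
    qed simp
  qed
qed

lemma weight_node: "weight (node i x) = levels ! i"
  by (simp add: weight_def node_def)

lemma weight_Inl: "weight (Inl x) = k x x"
  by (simp add: weight_def)

lemma weight_parent: "v \<in> vertices \<Longrightarrow> 0 \<le> weight v \<and> weight (parent v) \<le> weight v"
proof (erule vertices_cases)
  fix x assume x: "x \<in> X" "v = Inl x"
  then show ?thesis using level_of[OF k_in_kernel_values[OF x(1) x(1)]] k_nonneg[OF x(1) x(1)]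
    by (simp add: weight_Inl parent_Inl weight_node)
next
  fix i x assume v: "is_node i x" "v = node i x"
  then have "i < length levels" unfolding is_node_def by simp
  then show ?thesis
    using v levels_mono[of "i - 1" i] levels_nonneg by (simp add: parent_node weight_node)
qed

lemma level_of_le_diag: "x \<in> X \<Longrightarrow> y \<in> X \<Longrightarrow> level_of (k x y) \<le> level_of (k x x)"
  using levels_le_imp_le[OF level_of(1)[OF k_in_kernel_values] level_of(1)[OF k_in_kernel_values]]
    level_of(2)[OF k_in_kernel_values] k_le_diag by metis

lemma lca_Inl_Inl:
  assumes x: "x \<in> X" and y: "y \<in> X" and xy: "x \<noteq> y"
  shows "lca parent root (Inl x) (Inl y) = node (level_of (k x y)) x"
proof -
  define l where "l = level_of (k x y)"
  have l: "l < length levels" and kl: "levels ! l = k x y"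
    using level_of[OF k_in_kernel_values[OF x y]] l_def by auto
  have is_node_l: "is_node l x" using l kl k_le_diag[OF x y] x unfolding is_node_def by simp
  have "l \<le> level_of (k x x)" and "l \<le> level_of (k y y)"
    using level_of_le_diag[OF x y] level_of_le_diag[OF y x] k_sym[OF x y] l_def by simp_all
  then have "node l x \<in> ancestors parent (Inl x)" and "node l y \<in> ancestors parent (Inl y)"
    using node_in_ancestors_Inl x y by blast+
  moreover have "node l x = node l y" using node_eq[OF x y] kl by simp
  ultimately have common: "node l x \<in> ancestors parent (Inl x) \<inter> ancestors parent (Inl y)"
    by simp
  show ?thesis
    unfolding l_def[symmetric]
  proof (rule lca_eqI[OF rooted_tree_vertices Inl_in_vertices[OF x] common])
    fix b assume b: "b \<in> ancestors parent (Inl x) \<inter> ancestors parent (Inl y)"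
    have "b \<noteq> Inl x"
      using ancestors_Inl[OF y] b xy node_neq_Inl by (metis IntD2 sum.inject(1))
    then obtain j where j: "j \<le> level_of (k x x)" "b = node j x"
      using ancestors_Inl[OF x] b by blast
    obtain j' where j': "j' \<le> level_of (k y y)" "b = node j' y"
      using ancestors_Inl[OF y] b j(2) node_neq_Inl by (metis IntD2)
    have "is_node j x" and "is_node j' y"
      using is_node_mono[OF is_node_leaf_level[OF x] j(1)] is_node_mono[OF is_node_leaf_level[OF y] j'(1)] .
    then have "levels ! j \<le> k x y" and "j < length levels"
      using node_inj(2)[OF x y] j(2) j'(2) unfolding is_node_def by auto
    then have "j \<le> l" using levels_le_imp_le l kl by simp
    then show "b \<in> ancestors parent (node l x)" using node_in_ancestors_node[OF is_node_l] j(2) by simp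
  qed
qed

lemma weight_lca:
  assumes x: "x \<in> X" and y: "y \<in> X"
  shows "k x y = weight (lca parent root (Inl x) (Inl y))"
proof (cases "x = y")
  case True
  have "lca parent root (Inl x) (Inl y) = Inl x"
    using True by (intro lca_eqI[OF rooted_tree_vertices Inl_in_vertices[OF x]]) (auto simp: ancestors_refl)
  then show ?thesis using True by (simp add: weight_Inl)
next
  case False
  then show ?thesis
    using lca_Inl_Inl[OF x y] level_of(2)[OF k_in_kernel_values[OF x y]] by (simp add: weight_node)
qed

lemma induced_by_hierarchy:
  "\<exists>V r p w. hierarchy X V r p w \<and> (\<forall>x\<in>X. \<forall>y\<in>X. k x y = w (lca p r (Inl x) (Inl y)))"
  using rooted_tree_vertices leaves_vertices weight_parent weight_lca
  unfolding hierarchy_def by blast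

end

theorem theorem1:
  fixes X :: "'a set" and k :: "'a \<Rightarrow> 'a \<Rightarrow> real"
  assumes "finite X" and "X \<noteq> {}"
    and "\<forall>x\<in>X. \<forall>y\<in>X. 0 \<le> k x y"
  shows "strong_kernel X k \<longleftrightarrow>
    (\<exists>V r p w. hierarchy X V r p w \<and>
       (\<forall>x\<in>X. \<forall>y\<in>X. k x y = w (lca p r (Inl x) (Inl y))))"
proof
  assume "strong_kernel X k"
  moreover obtain g :: "'a \<Rightarrow> nat" where "inj_on g X"
    using ex_bij_betw_finite_nat[OF assms(1)] bij_betw_imp_inj_on by blast
  ultimately interpret strong_kernel_tree X k g using assms(1,2) by unfold_locales
  show "\<exists>V r p w. hierarchy X V r p w \<and> (\<forall>x\<in>X. \<forall>y\<in>X. k x y = w (lca p r (Inl x) (Inl y)))"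
    by (rule induced_by_hierarchy)
next
  assume "\<exists>V r p w. hierarchy X V r p w \<and> (\<forall>x\<in>X. \<forall>y\<in>X. k x y = w (lca p r (Inl x) (Inl y)))"
  then show "strong_kernel X k" using hierarchy_strong_kernel by blast
qed

end
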